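(* Let $f\colon X\to X$ be a homeomorphism of a metric space $X$. Every isolated set $\Lambda$ of $f$ admits a (discrete) catenary function.
   Context: An $f$-invariant set $\Lambda$ is isolated if there is a compact neighborhood $N$ of $\Lambda$ (an isolating neighborhood) such that $f^n(x)\in N$ for all $n\in\mathbb{Z}$ implies $x\in\Lambda$. For $\mathcal L\colon N\to\mathbb{R}$, set $\ddot{\mathcal L}(x)=\mathcal L(f(x))-2\mathcal L(x)+\mathcal L(f^{-1}(x))$ whenever $f(x),x,f^{-1}(x)\in N$. A catenary function for $\Lambda$ is a continuous $\mathcal L\colon N\to\mathbb{R}$, with $N$ an isolating neighborhood of $\Lambda$, such that $\mathcal L(\Lambda)=0$, $\mathcal L>0$ on $N\setminus\Lambda$, and $\ddot{\mathcal L}(x)=\mathcal L(x)$ wherever $\ddot{\mathcal L}(x)$ is defined. *)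

theory Defs
  imports "HOL-Analysis.Analysis"
begin

definition zpow :: "('a \<Rightarrow> 'a) \<Rightarrow> int \<Rightarrow> 'a \<Rightarrow> 'a" where
  "zpow f n = (if 0 \<le> n then (f ^^ nat n) else (inv f ^^ nat (- n)))"

definition isolating_nbhd :: "('a::topological_space \<Rightarrow> 'a) \<Rightarrow> 'a set \<Rightarrow> 'a set \<Rightarrow> bool" where
  "isolating_nbhd f \<Lambda> N \<longleftrightarrow> compact N \<and> \<Lambda> \<subseteq> interior N \<and>
     (\<forall>x. (\<forall>n::int. zpow f n x \<in> N) \<longrightarrow> x \<in> \<Lambda>)"

definition isolated_set :: "('a::topological_space \<Rightarrow> 'a) \<Rightarrow> 'a set \<Rightarrow> bool" where
  "isolated_set f \<Lambda> \<longleftrightarrow> f ` \<Lambda> = \<Lambda> \<and> (\<exists>N. isolating_nbhd f \<Lambda> N)"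

definition ddot :: "('a \<Rightarrow> 'a) \<Rightarrow> ('a \<Rightarrow> real) \<Rightarrow> 'a \<Rightarrow> real" where
  "ddot f L x = L (f x) - 2 * L x + L (inv f x)"

definition catenary_function ::
  "('a::topological_space \<Rightarrow> 'a) \<Rightarrow> 'a set \<Rightarrow> 'a set \<Rightarrow> ('a \<Rightarrow> real) \<Rightarrow> bool" where
  "catenary_function f \<Lambda> N L \<longleftrightarrow> isolating_nbhd f \<Lambda> N \<and> continuous_on N L \<and>
     (\<forall>x\<in>\<Lambda>. L x = 0) \<and> (\<forall>x\<in>N - \<Lambda>. L x > 0) \<and>
     (\<forall>x. f x \<in> N \<and> x \<in> N \<and> inv f x \<in> N \<longrightarrow> ddot f L x = L x)"

end

theory Submission
  imports Defs
begin

text \<open>Take a continuous cutoff h \<ge> 0 vanishing exactly on the isolating neighbourhood N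
  and let L(x) be the sum of c^|n| h(f^n x) over all integers n. On N, where h = 0, the shift
  relations of the forward and backward halves of this series turn the equation
  L(f x) - 2 L(x) + L(f\<inverse> x) = L(x) into the characteristic equation c + 1/c = 3, whose root
  c = (3 - \<surd>5)/2 lies in (0,1); so the series converges uniformly and L is continuous.
  L vanishes on the invariant set \<Lambda> \<subseteq> N, and at a point of N - \<Lambda> some forward or
  backward iterate leaves N, where h > 0, so L > 0 there.\<close>

lemma continuous_on_funpow:
  fixes f :: "'a::topological_space \<Rightarrow> 'a"
  assumes "continuous_on UNIV f"
  shows "continuous_on UNIV (f ^^ n)"
proof (induction n)
  case (Suc n)
  have "continuous_on UNIV (f \<circ> (f ^^ n))"
    by (rule continuous_on_compose[OF Suc continuous_on_subset[OF assms subset_UNIV]])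
  then show ?case by simp
qed (simp add: id_def)

definition orbit_sum :: "real \<Rightarrow> ('a \<Rightarrow> real) \<Rightarrow> ('a \<Rightarrow> 'a) \<Rightarrow> 'a \<Rightarrow> real" where
  "orbit_sum c h f x = (\<Sum>n. c ^ n * h ((f ^^ n) x))"

lemma orbit_sum_term_bound:
  fixes c M :: real and h :: "'a \<Rightarrow> real" and f :: "'a \<Rightarrow> 'a"
  assumes "\<And>y. \<bar>h y\<bar> \<le> M"
  shows "norm (c ^ n * h ((f ^^ n) x)) \<le> M * \<bar>c\<bar> ^ n"
proof -
  have "\<bar>h ((f ^^ n) x)\<bar> * \<bar>c\<bar> ^ n \<le> M * \<bar>c\<bar> ^ n"
    by (rule mult_right_mono[OF assms]) simp
  then show ?thesis by (simp add: abs_mult power_abs mult.commute)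
qed

lemma summable_orbit_sum:
  fixes c M :: real and h :: "'a \<Rightarrow> real" and f :: "'a \<Rightarrow> 'a"
  assumes "\<bar>c\<bar> < 1" "\<And>y. \<bar>h y\<bar> \<le> M"
  shows "summable (\<lambda>n. c ^ n * h ((f ^^ n) x))"
proof (rule summable_comparison_test')
  show "summable (\<lambda>n. M * \<bar>c\<bar> ^ n)"
    using assms(1) by (simp add: summable_geometric)
  show "norm (c ^ n * h ((f ^^ n) x)) \<le> M * \<bar>c\<bar> ^ n" for n
    by (rule orbit_sum_term_bound[where h = h, OF assms(2)])
qed

lemma orbit_sum_shift:
  fixes c M :: real and h :: "'a \<Rightarrow> real" and f :: "'a \<Rightarrow> 'a"
  assumes "\<bar>c\<bar> < 1" "\<And>y. \<bar>h y\<bar> \<le> M"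
  shows "orbit_sum c h f x = h x + c * orbit_sum c h f (f x)"
proof -
  note summable = summable_orbit_sum[where h = h and f = f, OF assms]
  have "orbit_sum c h f x - h x = (\<Sum>n. c ^ Suc n * h ((f ^^ Suc n) x))"
    unfolding orbit_sum_def using suminf_split_head[OF summable] by simp
  also have "\<dots> = (\<Sum>n. c * (c ^ n * h ((f ^^ n) (f x))))"
    by (simp add: funpow_Suc_right mult.assoc del: funpow.simps)
  also have "\<dots> = c * orbit_sum c h f (f x)"
    unfolding orbit_sum_def using suminf_mult[OF summable] .
  finally show ?thesis by simp
qed

lemma continuous_on_orbit_sum:
  fixes c M :: real and h :: "'a::topological_space \<Rightarrow> real" and f :: "'a \<Rightarrow> 'a"
  assumes "\<bar>c\<bar> < 1" "\<And>y. \<bar>h y\<bar> \<le> M"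
    and "continuous_on UNIV h" "continuous_on UNIV f"
  shows "continuous_on UNIV (orbit_sum c h f)"
  unfolding orbit_sum_def
proof (rule uniform_limit_theorem[where F = sequentially])
  show "\<forall>\<^sub>F n in sequentially. continuous_on UNIV (\<lambda>x. \<Sum>i<n. c ^ i * h ((f ^^ i) x))"
    by (intro always_eventually allI continuous_intros continuous_on_compose2[OF assms(3)]
        continuous_on_funpow assms(4)) auto
  show "uniform_limit UNIV (\<lambda>n x. \<Sum>i<n. c ^ i * h ((f ^^ i) x))
          (\<lambda>x. \<Sum>n. c ^ n * h ((f ^^ n) x)) sequentially"
    by (rule Weierstrass_m_test[OF orbit_sum_term_bound[where h = h, OF assms(2)]
          summable_mult[OF summable_geometric]]) (use assms(1) in auto)
qed simp

lemma orbit_sum_nonneg: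
  fixes c M :: real and h :: "'a \<Rightarrow> real" and f :: "'a \<Rightarrow> 'a"
  assumes "0 \<le> c" "c < 1" "\<And>y. 0 \<le> h y" "\<And>y. h y \<le> M"
  shows "0 \<le> orbit_sum c h f x"
proof -
  have "\<bar>h y\<bar> \<le> M" for y
    using assms(3,4) by simp
  then show ?thesis
    unfolding orbit_sum_def using assms(1-3)
    by (intro suminf_nonneg summable_orbit_sum) auto
qed

lemma orbit_sum_pos:
  fixes c M :: real and h :: "'a \<Rightarrow> real" and f :: "'a \<Rightarrow> 'a"
  assumes "0 < c" "c < 1" "\<And>y. 0 \<le> h y" "\<And>y. h y \<le> M" "0 < h ((f ^^ k) x)"
  shows "0 < orbit_sum c h f x"
proof -
  have "\<bar>h y\<bar> \<le> M" for y
    using assms(3,4) by simp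
  then show ?thesis
    unfolding orbit_sum_def using assms(1-3,5)
    by (intro suminf_pos2[of _ k] summable_orbit_sum) auto
qed

lemma orbit_sum_eq_0_on_invariant:
  assumes "f ` S \<subseteq> S" "x \<in> S" "\<And>y. y \<in> S \<Longrightarrow> h y = 0"
  shows "orbit_sum c h f x = 0"
proof -
  have "(f ^^ n) x \<in> S" for n
    by (induction n) (use assms(1,2) in auto)
  then show ?thesis
    unfolding orbit_sum_def by (simp add: assms(3))
qed

text \<open>The sum of c^|n| h(f^n x) over all integers n, with g playing the role of f\<inverse>; the
  term h x is contained in both one-sided sums.\<close>
definition bilateral_orbit_sum ::
  "real \<Rightarrow> ('a \<Rightarrow> real) \<Rightarrow> ('a \<Rightarrow> 'a) \<Rightarrow> ('a \<Rightarrow> 'a) \<Rightarrow> 'a \<Rightarrow> real" where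
  "bilateral_orbit_sum c h f g x = orbit_sum c h f x + orbit_sum c h g x - h x"

lemma continuous_on_bilateral_orbit_sum:
  fixes c M :: real and h :: "'a::topological_space \<Rightarrow> real"
  assumes "\<bar>c\<bar> < 1" "\<And>y. \<bar>h y\<bar> \<le> M"
    and "continuous_on UNIV h" "continuous_on UNIV f" "continuous_on UNIV g"
  shows "continuous_on UNIV (bilateral_orbit_sum c h f g)"
proof -
  have "continuous_on UNIV (orbit_sum c h f)" "continuous_on UNIV (orbit_sum c h g)"
    using continuous_on_orbit_sum[where h = h, OF assms(1,2,3)] assms(4,5) by blast+
  then show ?thesis
    unfolding bilateral_orbit_sum_def[abs_def] using assms(3) by (intro continuous_intros)
qed

lemma bilateral_orbit_sum_eq_0_on_invariant:
  assumes "f ` S \<subseteq> S" "g ` S \<subseteq> S" "x \<in> S" "\<And>y. y \<in> S \<Longrightarrow> h y = 0"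
  shows "bilateral_orbit_sum c h f g x = 0"
  unfolding bilateral_orbit_sum_def
  using orbit_sum_eq_0_on_invariant[of _ S x h, OF _ assms(3,4)] assms by simp

lemma orbit_sum_le_bilateral_orbit_sum:
  fixes c M :: real and h :: "'a \<Rightarrow> real"
  assumes "0 \<le> c" "c < 1" "\<And>y. 0 \<le> h y" "\<And>y. h y \<le> M"
  shows "orbit_sum c h f x \<le> bilateral_orbit_sum c h f g x"
    and "orbit_sum c h g x \<le> bilateral_orbit_sum c h f g x"
proof -
  have bound: "\<bar>h y\<bar> \<le> M" for y
    using assms(3,4) by simp
  have "\<bar>c\<bar> < 1"
    using assms(1,2) by simp
  have "h x \<le> orbit_sum c h F x" for F
  proof -
    have "0 \<le> c * orbit_sum c h F (F x)"
      using assms(1) orbit_sum_nonneg[where h = h, OF assms] by simp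
    then show ?thesis
      using orbit_sum_shift[where h = h and f = F and x = x, OF \<open>\<bar>c\<bar> < 1\<close> bound] by simp
  qed
  then show "orbit_sum c h f x \<le> bilateral_orbit_sum c h f g x"
    and "orbit_sum c h g x \<le> bilateral_orbit_sum c h f g x"
    unfolding bilateral_orbit_sum_def by (simp_all add: add.commute[of _ "orbit_sum c h g x"])
qed

lemma bilateral_orbit_sum_pos:
  fixes c M :: real and h :: "'a \<Rightarrow> real"
  assumes "0 < c" "c < 1" "\<And>y. 0 \<le> h y" "\<And>y. h y \<le> M"
    and "0 < h ((f ^^ k) x) \<or> 0 < h ((g ^^ k) x)"
  shows "0 < bilateral_orbit_sum c h f g x"
  using assms(5)
proof
  assume "0 < h ((f ^^ k) x)"
  then show ?thesis
    using orbit_sum_pos[where h = h, OF assms(1-4)]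
      orbit_sum_le_bilateral_orbit_sum(1)[where h = h, OF _ assms(2-4)]
      assms(1) by (meson less_le_trans less_imp_le)
next
  assume "0 < h ((g ^^ k) x)"
  then show ?thesis
    using orbit_sum_pos[where h = h, OF assms(1-4)]
      orbit_sum_le_bilateral_orbit_sum(2)[where h = h, OF _ assms(2-4)]
      assms(1) by (meson less_le_trans less_imp_le)
qed

lemma bilateral_orbit_sum_catenary_equation:
  fixes c M :: real and h :: "'a \<Rightarrow> real" and f :: "'a \<Rightarrow> 'a"
  assumes c: "\<bar>c\<bar> < 1" "c * (3 - c) = 1"
    and inverse: "g (f x) = x" "f (g x) = x"
    and h: "\<And>y. \<bar>h y\<bar> \<le> M" "h x = 0"
  defines "L \<equiv> bilateral_orbit_sum c h f g"
  shows "L (f x) - 2 * L x + L (g x) = L x"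
proof -
  note shift_f = orbit_sum_shift[where h = h and f = f, OF c(1) h(1)]
    and shift_g = orbit_sum_shift[where h = h and f = g, OF c(1) h(1)]
  have "orbit_sum c h f (f x) = (c * (3 - c)) * orbit_sum c h f (f x)"
    "orbit_sum c h g (g x) = (c * (3 - c)) * orbit_sum c h g (g x)"
    using c(2) by simp_all
  then have "orbit_sum c h f (f x) = (3 - c) * orbit_sum c h f x"
    "orbit_sum c h g (g x) = (3 - c) * orbit_sum c h g x"
    using shift_f[of x] shift_g[of x] h(2) by (simp_all add: algebra_simps)
  then show ?thesis
    unfolding L_def bilateral_orbit_sum_def
    using shift_f[of "g x"] shift_g[of "f x"] inverse h(2) by (simp add: algebra_simps)
qed

lemma closed_set_cutoff:
  fixes N :: "'a::metric_space set"
  assumes "closed N"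
  obtains h :: "'a \<Rightarrow> real" where "continuous_on UNIV h" "\<And>y. 0 \<le> h y" "\<And>y. h y \<le> 1"
    "\<And>y. h y = 0 \<longleftrightarrow> y \<in> N"
proof (cases "N = {}")
  case True
  then show ?thesis by (intro that[of "\<lambda>_. 1"]) simp_all
next
  case False
  show ?thesis
  proof (rule that[of "\<lambda>y. min 1 (infdist y N)"])
    show "min 1 (infdist y N) = 0 \<longleftrightarrow> y \<in> N" for y
      using in_closed_iff_infdist_zero[OF assms False] infdist_nonneg[of y N]
      by (auto simp: min_def)
    show "continuous_on UNIV (\<lambda>y. min 1 (infdist y N))"
      by (intro continuous_intros)
  qed (simp_all add: infdist_nonneg)
qed

lemma catenary_ratio:
  obtains c :: real where "0 < c" "c < 1" "c * (3 - c) = 1"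
proof (rule that[of "(3 - sqrt 5) / 2"])
  have "2 < sqrt 5" "sqrt 5 < 3"
    by (simp_all add: real_less_rsqrt real_less_lsqrt)
  then show "0 < (3 - sqrt 5) / 2" "(3 - sqrt 5) / 2 < 1"
    by simp_all
  show "(3 - sqrt 5) / 2 * (3 - (3 - sqrt 5) / 2) = 1"
    by (simp add: field_simps)
qed

lemma isolating_nbhd_orbit_leaves:
  assumes "isolating_nbhd f \<Lambda> N" "x \<notin> \<Lambda>"
  obtains k where "(f ^^ k) x \<notin> N \<or> (inv f ^^ k) x \<notin> N"
proof -
  obtain n :: int where "zpow f n x \<notin> N"
    using assms unfolding isolating_nbhd_def by blast
  then show thesis
    using that unfolding zpow_def by (cases "0 \<le> n") auto
qed

lemma catenary_function_bilateral_orbit_sum: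
  fixes f :: "'a::topological_space \<Rightarrow> 'a" and h :: "'a \<Rightarrow> real" and c :: real
  assumes f: "homeomorphism UNIV UNIV f (inv f)"
    and N: "isolating_nbhd f \<Lambda> N" and invariant: "f ` \<Lambda> = \<Lambda>"
    and h: "continuous_on UNIV h" "\<And>y. 0 \<le> h y" "\<And>y. h y \<le> 1" "\<And>y. h y = 0 \<longleftrightarrow> y \<in> N"
    and c: "0 < c" "c < 1" "c * (3 - c) = 1"
  shows "catenary_function f \<Lambda> N (bilateral_orbit_sum c h f (inv f))"
proof -
  let ?L = "bilateral_orbit_sum c h f (inv f)"
  have inverse: "\<And>y. inv f (f y) = y" "\<And>y. f (inv f y) = y"
    and continuous: "continuous_on UNIV f" "continuous_on UNIV (inv f)"
    using f unfolding homeomorphism_def by auto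
  then have inv_invariant: "inv f ` \<Lambda> = \<Lambda>"
    by (metis image_inv_f_f inj_on_inverseI invariant)
  have h_bound: "\<bar>h y\<bar> \<le> 1" for y
    using h(2,3) by simp
  have "continuous_on UNIV ?L"
    using c by (intro continuous_on_bilateral_orbit_sum[OF _ h_bound h(1) continuous]) simp
  then have "continuous_on N ?L"
    by (rule continuous_on_subset) simp
  moreover have "?L x = 0" if "x \<in> \<Lambda>" for x
  proof -
    have "\<Lambda> \<subseteq> N"
      using N interior_subset unfolding isolating_nbhd_def by blast
    then show ?thesis
      by (intro bilateral_orbit_sum_eq_0_on_invariant[OF _ _ that])
        (auto simp: invariant inv_invariant h(4))
  qed
  moreover have "?L x > 0" if x: "x \<in> N - \<Lambda>" for x
  proof -
    obtain k where "(f ^^ k) x \<notin> N \<or> (inv f ^^ k) x \<notin> N"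
      using isolating_nbhd_orbit_leaves[OF N, of x] x by blast
    then show ?thesis
      using c h(2,3,4) by (intro bilateral_orbit_sum_pos[where M = 1 and k = k])
        (auto simp: less_eq_real_def)
  qed
  moreover have "ddot f ?L x = ?L x" if "x \<in> N" for x
    using bilateral_orbit_sum_catenary_equation[where f = f and g = "inv f" and h = h,
        OF _ c(3) inverse h_bound] c h(4) that
    unfolding ddot_def by simp
  ultimately show ?thesis
    unfolding catenary_function_def using N by blast
qed

theorem mainTheorem15:
  fixes f :: "'a::metric_space \<Rightarrow> 'a" and \<Lambda> :: "'a set"
  assumes "homeomorphism UNIV UNIV f (inv f)"
    and "isolated_set f \<Lambda>"
  shows "\<exists>N L. catenary_function f \<Lambda> N L"
proof -
  obtain N where N: "isolating_nbhd f \<Lambda> N" and invariant: "f ` \<Lambda> = \<Lambda>"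
    using assms(2) unfolding isolated_set_def by blast
  then have "closed N"
    unfolding isolating_nbhd_def by (simp add: compact_imp_closed)
  then obtain h :: "'a \<Rightarrow> real" where
    "continuous_on UNIV h" "\<And>y. 0 \<le> h y" "\<And>y. h y \<le> 1" "\<And>y. h y = 0 \<longleftrightarrow> y \<in> N"
    using closed_set_cutoff by blast
  moreover obtain c :: real where "0 < c" "c < 1" "c * (3 - c) = 1"
    by (rule catenary_ratio)
  ultimately show ?thesis
    using catenary_function_bilateral_orbit_sum[OF assms(1) N invariant] by blast
qed

end
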